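(* Let $X$ be a non-negative heavy-tailed random variable and let $h_X$ be a natural scale of $X$. Then the map $c\mapsto \mathbb{I}_{h_X}(cX)$, defined for $c>0$, is continuous at $c=1$ (where its value is $1$).
   Context: $R_Y(x):=-\log P(Y>x)$. $Y$ is heavy-tailed if $E(e^{sY})=\infty$ for all $s>0$. A natural scale of a heavy-tailed $Y$ is a concave $h:[0,\infty)\to[0,\infty)$ with $h(0)=0$, $h(x)\to\infty$, and $\liminf_{x\to\infty}R_Y(x)/h(x)=1$. For a continuous increasing $h:[0,\infty)\to[0,\infty)$ with $h(x)\to\infty$, $\mathbb{I}_h(Y):=\liminf_{x\to\infty}R_Y(x)/h(x)$, which equals $\sup\{s\ge0: E(e^{s h(Y)})<\infty\}$ for non-negative $Y$. *)

theory Defs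
  imports "HOL-Probability.Probability"
begin

definition tail_exponent :: "'a measure \<Rightarrow> ('a \<Rightarrow> real) \<Rightarrow> real \<Rightarrow> ereal" where
  "tail_exponent M Y x =
     (let p = measure M {\<omega> \<in> space M. Y \<omega> > x}
      in if p = 0 then \<infinity> else ereal (- ln p))"

definition I_scale :: "'a measure \<Rightarrow> (real \<Rightarrow> real) \<Rightarrow> ('a \<Rightarrow> real) \<Rightarrow> ereal" where
  "I_scale M h Y = Liminf at_top (\<lambda>x. tail_exponent M Y x / ereal (h x))"

definition heavy_tailed :: "'a measure \<Rightarrow> ('a \<Rightarrow> real) \<Rightarrow> bool" where
  "heavy_tailed M Y \<longleftrightarrow> (\<forall>s>0. (\<integral>\<^sup>+ \<omega>. ennreal (exp (s * Y \<omega>)) \<partial>M) = \<infinity>)"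

definition natural_scale :: "'a measure \<Rightarrow> ('a \<Rightarrow> real) \<Rightarrow> (real \<Rightarrow> real) \<Rightarrow> bool" where
  "natural_scale M Y h \<longleftrightarrow>
     concave_on {0..} h \<and> (\<forall>x\<ge>0. h x \<ge> 0) \<and> h 0 = 0 \<and>
     filterlim h at_top at_top \<and>
     Liminf at_top (\<lambda>x. tail_exponent M Y x / ereal (h x)) = 1"

end

theory Submission
  imports Defs
begin

text \<open>Rescaling X by c > 0 rescales the argument of the tail exponent:
  R_{cX}(x) = R_X(x/c). A concave scale h with h(0) = 0 that tends to infinity is nondecreasing
  and satisfies t h(x) \<le> h(t x) for t \<in> [0,1]; hence h(x) and h(x/c) agree up to the factors
  min 1 c and max 1 c. Therefore I_h(cX) lies between 1/max 1 c and 1/min 1 c, and both bounds tend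
  to 1 as c tends to 1.\<close>

lemma concave_on_scale_ge:
  fixes h :: "real \<Rightarrow> real"
  assumes "concave_on {0..} h" "h 0 = 0" "0 \<le> t" "t \<le> 1" "0 \<le> x"
  shows "t * h x \<le> h (t * x)"
  using concave_onD[OF assms(1), of t 0 x] assms by simp

lemma concave_on_atLeast_mono_if_unbounded:
  fixes h :: "real \<Rightarrow> real"
  assumes conc: "concave_on {a..} h" and lim: "filterlim h at_top at_top"
    and "a \<le> x" "x < y"
  shows "h x \<le> h y"
proof -
  have "eventually (\<lambda>z. h x \<le> h z) at_top"
    using lim by (simp add: filterlim_at_top)
  then have "eventually (\<lambda>z. h x \<le> h z \<and> y < z) at_top"
    using eventually_gt_at_top[of y] by (rule eventually_conj)
  then obtain z where z: "h x \<le> h z" "y < z"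
    by (auto dest: eventually_happens)
  define t where "t = (y - x) / (z - x)"
  have t: "0 \<le> t" "t \<le> 1"
    using assms z by (auto simp: t_def field_simps)
  have "t * (z - x) = y - x"
    using assms z by (simp add: t_def)
  then have "(1 - t) *\<^sub>R x + t *\<^sub>R z = y"
    by (simp add: algebra_simps)
  then have "(1 - t) * h x + t * h z \<le> h y"
    using concave_onD[OF conc t, of x z] assms z by simp
  moreover have "(1 - t) * h x + t * h x \<le> (1 - t) * h x + t * h z"
    using t z by (intro add_left_mono mult_left_mono) auto
  ultimately show ?thesis
    by (simp add: algebra_simps)
qed

lemma concave_on_rescale_bounds:
  fixes h :: "real \<Rightarrow> real"
  assumes conc: "concave_on {0..} h" and "h 0 = 0" and lim: "filterlim h at_top at_top"
    and c: "0 < c" and x: "0 \<le> x"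
  shows "min 1 c * h (x / c) \<le> h x" "h x \<le> max 1 c * h (x / c)"
proof -
  have mono: "h u \<le> h v" if "0 \<le> u" "u \<le> v" for u v
    using concave_on_atLeast_mono_if_unbounded[OF conc lim, of u v] that
    by (cases "u = v") auto
  have "min 1 c * h (x / c) \<le> h x \<and> h x \<le> max 1 c * h (x / c)"
  proof (cases "1 \<le> c")
    case True
    have "x / c \<le> x"
      using True c x by (simp add: divide_le_eq mult_left_mono[of 1 c x, simplified])
    moreover have "(1 / c) * h x \<le> h ((1 / c) * x)"
      using concave_on_scale_ge[OF conc \<open>h 0 = 0\<close>, of "1 / c" x] True c x by simp
    ultimately show ?thesis
      using True c x mono[of "x / c" x] by (simp add: field_simps)
  next
    case False
    have "x \<le> x / c"
      using False c x by (simp add: le_divide_eq mult_left_mono[of c 1 x, simplified])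
    moreover have "c * h (x / c) \<le> h (c * (x / c))"
      using concave_on_scale_ge[OF conc \<open>h 0 = 0\<close>, of c "x / c"] False c x by simp
    ultimately show ?thesis
      using False c x mono[of x "x / c"] by simp
  qed
  then show "min 1 c * h (x / c) \<le> h x" "h x \<le> max 1 c * h (x / c)"
    by auto
qed

lemma ereal_divide_mult_denominator:
  fixes T :: ereal
  assumes "0 < k" "0 < b"
  shows "T / ereal (k * b) = ereal (1 / k) * (T / ereal b)"
  using assms by (cases T) (auto simp: field_simps)

lemma ereal_divide_antimono:
  fixes T :: ereal
  assumes "0 \<le> T" "0 < a" "a \<le> b"
  shows "T / ereal b \<le> T / ereal a"
  using assms by (cases T) (auto intro: divide_left_mono)

lemma filtermap_divide_const_at_top:
  fixes c :: real
  assumes "0 < c"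
  shows "filtermap (\<lambda>x. x / c) at_top = at_top"
proof (rule filtermap_fun_inverse[of "\<lambda>x. c * x"])
  show "filterlim (\<lambda>x. c * x) at_top at_top"
    using assms by (intro filterlim_tendsto_pos_mult_at_top[OF tendsto_const]) (auto simp: filterlim_ident)
  have "filterlim (\<lambda>x. (1 / c) * x) at_top at_top"
    using assms by (intro filterlim_tendsto_pos_mult_at_top[OF tendsto_const]) (auto simp: filterlim_ident)
  then show "filterlim (\<lambda>x. x / c) at_top at_top"
    by simp
  show "eventually (\<lambda>x. c * x / c = x) at_top"
    using assms by simp
qed

lemma Liminf_at_top_divide_const:
  fixes c :: real and f :: "real \<Rightarrow> 'b::complete_lattice"
  assumes "0 < c"
  shows "Liminf at_top (\<lambda>x. f (x / c)) = Liminf at_top f"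
proof -
  have "inj (\<lambda>x::real. x / c)"
    using assms by (auto simp: inj_def)
  then show ?thesis
    using Liminf_filtermap_eq[of "\<lambda>x. x / c" at_top f] filtermap_divide_const_at_top[OF assms]
    by simp
qed

lemma Liminf_ratio_rescale_bounds:
  fixes T :: "real \<Rightarrow> ereal" and h :: "real \<Rightarrow> real"
  assumes T: "\<And>x. 0 \<le> T x"
    and conc: "concave_on {0..} h" and h0: "h 0 = 0" and lim: "filterlim h at_top at_top"
    and c: "0 < c"
  defines "L \<equiv> Liminf at_top (\<lambda>x. T x / ereal (h x))"
  shows "ereal (1 / max 1 c) * L \<le> Liminf at_top (\<lambda>x. T (x / c) / ereal (h x))"
    and "Liminf at_top (\<lambda>x. T (x / c) / ereal (h x)) \<le> ereal (1 / min 1 c) * L"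
proof -
  let ?r = "\<lambda>x. T (x / c) / ereal (h (x / c))"
  let ?q = "\<lambda>x. T (x / c) / ereal (h x)"
  have "eventually (\<lambda>x. 0 < h x) at_top"
    using lim by (simp add: filterlim_at_top_dense)
  then have "eventually (\<lambda>x. 0 < h x) (filtermap (\<lambda>x. x / c) at_top)"
    by (simp add: filtermap_divide_const_at_top[OF c])
  then have pos: "eventually (\<lambda>x. 0 < h (x / c)) at_top"
    by (simp add: eventually_filtermap)
  have bounds: "eventually (\<lambda>x. ereal (1 / max 1 c) * ?r x \<le> ?q x \<and>
      ?q x \<le> ereal (1 / min 1 c) * ?r x) at_top"
    using pos eventually_ge_at_top[of 0]
  proof eventually_elim
    case (elim x)
    note h_bounds = concave_on_rescale_bounds[OF conc h0 lim c \<open>0 \<le> x\<close>]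
    have "0 < min 1 c * h (x / c)"
      using elim c by simp
    then have "0 < h x"
      using h_bounds(1) by linarith
    have "ereal (1 / max 1 c) * ?r x = T (x / c) / ereal (max 1 c * h (x / c))"
      using elim by (simp add: ereal_divide_mult_denominator)
    also have "\<dots> \<le> ?q x"
      using h_bounds(2) T \<open>0 < h x\<close> by (intro ereal_divide_antimono)
    finally have lower: "ereal (1 / max 1 c) * ?r x \<le> ?q x" .
    have "?q x \<le> T (x / c) / ereal (min 1 c * h (x / c))"
      using h_bounds(1) T \<open>0 < min 1 c * h (x / c)\<close> by (intro ereal_divide_antimono)
    also have "\<dots> = ereal (1 / min 1 c) * ?r x"
      using elim c by (simp add: ereal_divide_mult_denominator)
    finally show ?case
      using lower by simp
  qed
  have r_L: "Liminf at_top ?r = L"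
    unfolding L_def by (rule Liminf_at_top_divide_const[OF c])
  have "ereal (1 / max 1 c) * L = Liminf at_top (\<lambda>x. ereal (1 / max 1 c) * ?r x)"
    unfolding r_L[symmetric] by (rule Liminf_ereal_mult_left[symmetric]) simp_all
  also have "\<dots> \<le> Liminf at_top ?q"
    using bounds by (intro Liminf_mono) (auto elim: eventually_mono)
  finally show "ereal (1 / max 1 c) * L \<le> Liminf at_top ?q" .
  have "Liminf at_top ?q \<le> Liminf at_top (\<lambda>x. ereal (1 / min 1 c) * ?r x)"
    using bounds by (intro Liminf_mono) (auto elim: eventually_mono)
  also have "\<dots> = ereal (1 / min 1 c) * L"
    unfolding r_L[symmetric] by (rule Liminf_ereal_mult_left) (use c in simp_all)
  finally show "Liminf at_top ?q \<le> ereal (1 / min 1 c) * L" .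
qed

lemma tail_exponent_nonneg:
  assumes "prob_space M"
  shows "0 \<le> tail_exponent M Y x"
proof -
  interpret prob_space M by fact
  let ?p = "measure M {\<omega> \<in> space M. x < Y \<omega>}"
  have "ln ?p \<le> 0" if "?p \<noteq> 0"
  proof -
    have "0 < ?p"
      using that measure_nonneg[of M] by (simp add: order_less_le)
    then show ?thesis
      using prob_le_1 by (simp add: ln_le_zero_iff)
  qed
  then show ?thesis
    by (simp add: tail_exponent_def Let_def)
qed

lemma tail_exponent_mult_const:
  assumes "0 < c"
  shows "tail_exponent M (\<lambda>\<omega>. c * X \<omega>) x = tail_exponent M X (x / c)"
proof -
  have "{\<omega> \<in> space M. x < c * X \<omega>} = {\<omega> \<in> space M. x / c < X \<omega>}"
    using assms by (auto simp: pos_divide_less_eq mult.commute)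
  then show ?thesis
    by (simp add: tail_exponent_def)
qed

lemma I_scale_mult_const_bounds:
  assumes "prob_space M" "natural_scale M X h" "0 < c"
  shows "ereal (1 / max 1 c) \<le> I_scale M h (\<lambda>\<omega>. c * X \<omega>)"
    and "I_scale M h (\<lambda>\<omega>. c * X \<omega>) \<le> ereal (1 / min 1 c)"
proof -
  have I_eq: "I_scale M h (\<lambda>\<omega>. c * X \<omega>) = Liminf at_top (\<lambda>x. tail_exponent M X (x / c) / ereal (h x))"
    by (simp add: I_scale_def tail_exponent_mult_const[OF \<open>0 < c\<close>])
  note bounds = Liminf_ratio_rescale_bounds[of "tail_exponent M X" h c,
      OF tail_exponent_nonneg[OF assms(1)] _ _ _ \<open>0 < c\<close>]
  from assms(2) show "ereal (1 / max 1 c) \<le> I_scale M h (\<lambda>\<omega>. c * X \<omega>)"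
    and "I_scale M h (\<lambda>\<omega>. c * X \<omega>) \<le> ereal (1 / min 1 c)"
    unfolding I_eq natural_scale_def using bounds by auto
qed

theorem lemma4p2:
  fixes M :: "'a measure" and X :: "'a \<Rightarrow> real" and h :: "real \<Rightarrow> real"
  assumes "prob_space M"
    and "X \<in> borel_measurable M"
    and "\<forall>\<omega>\<in>space M. X \<omega> \<ge> 0"
    and "heavy_tailed M X"
    and "natural_scale M X h"
  shows "I_scale M h (\<lambda>\<omega>. 1 * X \<omega>) = 1 \<and>
         continuous (at 1 within {0<..}) (\<lambda>c::real. I_scale M h (\<lambda>\<omega>. c * X \<omega>))"
proof -
  let ?I = "\<lambda>c::real. I_scale M h (\<lambda>\<omega>. c * X \<omega>)"
  note bounds = I_scale_mult_const_bounds[OF assms(1,5)]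
  have I_one: "?I 1 = 1"
    using bounds[of 1] by (simp add: antisym one_ereal_def)
  have bound_lim: "((\<lambda>c. ereal (1 / f 1 c)) \<longlongrightarrow> 1) (at 1 within {0<..})"
    if "f = min \<or> f = max" for f :: "real \<Rightarrow> real \<Rightarrow> real"
    using that by (auto simp: one_ereal_def intro!: tendsto_eq_intros)
  have "(?I \<longlongrightarrow> 1) (at 1 within {0<..})"
    using bound_lim[of max] bound_lim[of min]
    by (rule tendsto_sandwich[rotated 2]) (auto simp: eventually_at_filter bounds)
  then show ?thesis
    using I_one by (simp add: continuous_within)
qed

end
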